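(* Let $d$ be an even positive integer. If $X\subset\Omega(d)$ is a complex spherical $2$-code, then $|X|\le 2d$. Moreover, a tournament $G$ on $2d$ vertices with adjacency matrix $A$ is the tournament of some complex spherical $2$-code $X\subset\Omega(d)$ (necessarily with $|X|=2d$) if and only if $I+A-A^T$ is a skew Hadamard matrix.
   Context: $\Omega(d)=\{x\in\mathbb C^d:x^*x=1\}$. For finite $X\subset\Omega(d)$, $A(X)=\{x^*y:x,y\in X,x\ne y\}$; $X$ is a complex spherical $2$-code if $|A(X)|=2$ and $A(X)$ contains a non-real number, so $A(X)=\{\alpha,\overline\alpha\}$ with $\mathrm{Im}\,\alpha>0$. Its tournament is $(X,E)$ with $E=\{(x,y):x^*y=\alpha\}$, whose adjacency matrix has $A_{xy}=1$ if $(x,y)\in E$ and $0$ otherwise. An $n\times n$ $(\pm1)$-matrix $H$ is skew Hadamard if $H+H^T=2I$ and $HH^T=nI$. *)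

theory Defs
  imports "HOL-Analysis.Analysis"
begin

text \<open>Hermitian inner product x^* y on C^d, with d = CARD('n).\<close>
definition herm_ip :: "complex ^ 'n::finite \<Rightarrow> complex ^ 'n \<Rightarrow> complex" where
  "herm_ip x y = (\<Sum>i\<in>UNIV. cnj (x $ i) * y $ i)"

definition Omega :: "(complex ^ 'n::finite) set" where
  "Omega = {x. herm_ip x x = 1}"

definition inner_set :: "(complex ^ 'n::finite) set \<Rightarrow> complex set" where
  "inner_set X = {herm_ip x y | x y. x \<in> X \<and> y \<in> X \<and> x \<noteq> y}"

definition complex_spherical_2code :: "(complex ^ 'n::finite) set \<Rightarrow> bool" where
  "complex_spherical_2code X \<longleftrightarrow> finite X \<and> X \<subseteq> Omega \<and>
     card (inner_set X) = 2 \<and> (\<exists>a\<in>inner_set X. a \<notin> \<real>)"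

definition code_alpha :: "(complex ^ 'n::finite) set \<Rightarrow> complex" where
  "code_alpha X = (THE a. a \<in> inner_set X \<and> Im a > 0)"

definition code_edge :: "(complex ^ 'n::finite) set \<Rightarrow> complex ^ 'n \<Rightarrow> complex ^ 'n \<Rightarrow> bool" where
  "code_edge X x y \<longleftrightarrow> x \<in> X \<and> y \<in> X \<and> herm_ip x y = code_alpha X"

definition is_tournament :: "nat \<Rightarrow> (nat \<Rightarrow> nat \<Rightarrow> bool) \<Rightarrow> bool" where
  "is_tournament n E \<longleftrightarrow> (\<forall>i<n. \<not> E i i) \<and>
     (\<forall>i<n. \<forall>j<n. i \<noteq> j \<longrightarrow> (E i j \<longleftrightarrow> \<not> E j i))"

definition adj_matrix :: "(nat \<Rightarrow> nat \<Rightarrow> bool) \<Rightarrow> nat \<Rightarrow> nat \<Rightarrow> int" where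
  "adj_matrix E i j = (if E i j then 1 else 0)"

definition is_tournament_of_code ::
  "nat \<Rightarrow> (nat \<Rightarrow> nat \<Rightarrow> bool) \<Rightarrow> (complex ^ 'n::finite) set \<Rightarrow> bool" where
  "is_tournament_of_code n E X \<longleftrightarrow> complex_spherical_2code X \<and>
     (\<exists>f. bij_betw f {..<n} X \<and> (\<forall>i<n. \<forall>j<n. E i j \<longleftrightarrow> code_edge X (f i) (f j)))"

definition skew_hadamard :: "nat \<Rightarrow> (nat \<Rightarrow> nat \<Rightarrow> int) \<Rightarrow> bool" where
  "skew_hadamard n H \<longleftrightarrow>
     (\<forall>i<n. \<forall>j<n. H i j = 1 \<or> H i j = -1) \<and>
     (\<forall>i<n. \<forall>j<n. H i j + H j i = (if i = j then 2 else 0)) \<and>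
     (\<forall>i<n. \<forall>j<n. (\<Sum>k<n. H i k * H j k) = (if i = j then int n else 0))"

end

theory Submission
  imports Defs
begin

text \<open>
  Write the Gram matrix of a code \<open>x\<^sub>1, \<dots>, x\<^sub>n\<close> with \<open>\<alpha> = a + \<i> b\<close> as
  \<open>P + \<i> b S\<close>, where \<open>P = (1 - a) I + a J\<close> is its real part and \<open>S\<close> is the skew \<open>\<plusminus>1\<close>
  sign pattern, so that \<open>I + S\<close> is the matrix of the tournament. In \<open>\<real>\<^sup>2\<^sup>d\<close> the matrix \<open>P\<close> is
  positive definite unless \<open>1 - a + n a = 0\<close>, which gives \<open>n \<le> 2d\<close>; the degenerate case
  \<open>n = 2d + 1\<close> is excluded by a congruence modulo 4 for \<open>S\<^sup>2\<close>, as \<open>d\<close> is even.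

  If the \<open>x\<^sub>j\<close> span \<open>\<real>\<^sup>2\<^sup>d\<close>, a suitable complex combination of them is real-orthogonal
  to all of them, hence zero, and its imaginary parts give
  \<open>S\<^sup>2 + \<beta> r r\<^sup>T = -((1 - a) / b\<^sup>2) P\<close> with \<open>r\<close> the row sums of \<open>S\<close>. For \<open>n = 2d\<close> the
  \<open>r\<^sub>j\<close> are odd and the same congruence forces \<open>\<beta> = 0\<close>, hence \<open>a = 0\<close> and
  \<open>S S\<^sup>T = (n - 1) I\<close>: \<open>I + S\<close> is skew Hadamard.

  Conversely, if \<open>I + S\<close> is skew Hadamard then \<open>W = I + \<i> S / \<surd>(n - 1)\<close> satisfies
  \<open>W\<^sup>2 = 2 W\<close>, and the columns of \<open>W\<close> are eigenvectors of the real skew matrix \<open>S\<close> for a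
  nonzero eigenvalue. Such an eigenspace is Hermitian-orthogonal to its complex conjugate, so
  it has dimension at most \<open>n / 2 = d\<close> and realizes \<open>W\<close> as the Gram matrix of a code in
  \<open>\<complex>\<^sup>d\<close> whose tournament is the given one.
\<close>

lemma sum_lessThan_if_eq:
  fixes x y :: "'a::comm_ring_1"
  assumes "j < n"
  shows "(\<Sum>k<n. if j = k then x else y) = x + of_nat (n - 1) * y"
proof -
  have "(\<Sum>k<n. if j = k then x else y) = (\<Sum>k<n. y + (if j = k then x - y else 0))"
    by (rule sum.cong) auto
  also have "\<dots> = of_nat n * y + (x - y)"
    using assms by (simp add: sum.distrib)
  also have "\<dots> = x + of_nat (n - 1) * y"
    using assms by (cases n) (auto simp: algebra_simps)
  finally show ?thesis .
qed

lemma even_sum_signs_minus_card: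
  assumes "finite K" "\<And>k. k \<in> K \<Longrightarrow> g k = 1 \<or> g k = (-1::int)"
  shows "even (sum g K - int (card K))"
proof -
  have "sum g K - int (card K) = (\<Sum>k\<in>K. g k - 1)" by (simp add: sum_subtractf)
  also have "even \<dots>"
  proof (rule dvd_sum)
    fix k assume "k \<in> K"
    then have "g k - 1 = 0 \<or> g k - 1 = 2 * (-1)" using assms(2) by fastforce
    then show "even (g k - 1)" by (metis dvd_0_right dvd_triv_left)
  qed
  finally show ?thesis .
qed

section \<open>Hermitian inner product\<close>

lemma herm_ip_cnj: "herm_ip y x = cnj (herm_ip x y)"
  unfolding herm_ip_def by (simp add: mult.commute)

lemma herm_ip_add_right: "herm_ip x (y + z) = herm_ip x y + herm_ip x z"
  unfolding herm_ip_def by (simp add: distrib_left sum.distrib)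

lemma herm_ip_diff_right: "herm_ip x (y - z) = herm_ip x y - herm_ip x z"
  unfolding herm_ip_def by (simp add: right_diff_distrib sum_subtractf)

lemma herm_ip_scale_right: "herm_ip x (a *s y) = a * herm_ip x y"
  unfolding herm_ip_def by (simp add: sum_distrib_left algebra_simps)

lemma herm_ip_scale_left: "herm_ip (a *s x) y = cnj a * herm_ip x y"
  unfolding herm_ip_def by (simp add: sum_distrib_left algebra_simps)

lemma herm_ip_sum_right: "herm_ip x (\<Sum>k\<in>K. g k) = (\<Sum>k\<in>K. herm_ip x (g k))"
  unfolding herm_ip_def by (simp add: sum_distrib_left sum.swap[of _ UNIV K])

lemma herm_ip_sum_left: "herm_ip (\<Sum>k\<in>K. g k) y = (\<Sum>k\<in>K. herm_ip (g k) y)"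
  by (metis (no_types, lifting) herm_ip_cnj herm_ip_sum_right cnj_sum sum.cong)

lemma herm_ip_zero_right [simp]: "herm_ip x 0 = 0"
  unfolding herm_ip_def by simp

lemma herm_ip_zero_left [simp]: "herm_ip 0 y = 0"
  unfolding herm_ip_def by simp

lemma inner_eq_Re_herm_ip: "inner x y = Re (herm_ip x y)"
  unfolding herm_ip_def inner_vec_def inner_complex_def by (simp add: Re_sum)

lemma herm_ip_self_eq_inner: "herm_ip x x = of_real (inner x x)"
  unfolding herm_ip_def inner_vec_def inner_complex_def
  by (simp add: complex_eq_iff Re_sum Im_sum power2_eq_square)

lemma herm_ip_axis:
  "herm_ip (axis i (1::complex)) (axis j 1) = (if i = j then 1 else 0)"
proof -
  have "herm_ip (axis i (1::complex)) (axis j 1) =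
      (\<Sum>p\<in>UNIV. if p = i then (if i = j then 1 else 0) else 0)"
    unfolding herm_ip_def axis_def by (intro sum.cong) auto
  then show ?thesis by simp
qed

section \<open>Frames of unit vectors with two inner products\<close>

locale two_angle_frame =
  fixes n :: nat and f :: "nat \<Rightarrow> complex^'n::finite" and \<alpha> :: complex
  assumes inj: "inj_on f {..<n}"
    and unit: "\<And>j. j < n \<Longrightarrow> herm_ip (f j) (f j) = 1"
    and angles: "\<And>j k. j < n \<Longrightarrow> k < n \<Longrightarrow> j \<noteq> k \<Longrightarrow>
      herm_ip (f j) (f k) = \<alpha> \<or> herm_ip (f j) (f k) = cnj \<alpha>"
    and Im_alpha_pos: "Im \<alpha> > 0"
    and two_le_n: "2 \<le> n"
begin

text \<open>
  The \<^emph>\<open>weight\<close>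
  \<open>1 - Re \<alpha> + n Re \<alpha>\<close> is the eigenvalue of \<open>P\<close> on the all-ones vector.
\<close>

definition S :: "nat \<Rightarrow> nat \<Rightarrow> int" where
  "S j k = (if j = k then 0 else if herm_ip (f j) (f k) = \<alpha> then 1 else -1)"

definition r :: "nat \<Rightarrow> int" where
  "r j = (\<Sum>k<n. S j k)"

definition T :: "nat \<Rightarrow> nat \<Rightarrow> int" where
  "T l j = (\<Sum>k<n. S l k * S k j)"

definition P :: "nat \<Rightarrow> nat \<Rightarrow> real" where
  "P l k = (if l = k then 1 else Re \<alpha>)"

lemma cnj_alpha_neq: "cnj \<alpha> \<noteq> \<alpha>"
  using Im_alpha_pos by (auto simp: complex_eq_iff)

lemma herm_ip_frame:
  "j < n \<Longrightarrow> k < n \<Longrightarrow> herm_ip (f j) (f k) = Complex (P j k) (Im \<alpha> * of_int (S j k))"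
  using angles[of j k] unit[of j] cnj_alpha_neq by (auto simp: S_def P_def complex_eq_iff)

lemma S_diag [simp]: "S j j = 0"
  by (simp add: S_def)

lemma S_sign: "j \<noteq> k \<Longrightarrow> S j k = 1 \<or> S j k = -1"
  by (simp add: S_def)

lemma S_skew: "j < n \<Longrightarrow> k < n \<Longrightarrow> S k j = - S j k"
  using angles[of j k] cnj_alpha_neq herm_ip_cnj[of "f k" "f j"]
  by (cases "j = k") (auto simp: S_def)

lemma inner_frame: "j < n \<Longrightarrow> k < n \<Longrightarrow> inner (f j) (f k) = P j k"
  by (simp add: inner_eq_Re_herm_ip herm_ip_frame)

lemma Re_alpha_less_1: "Re \<alpha> < 1"
proof -
  have "f 0 \<noteq> f 1" using inj two_le_n by (auto dest: inj_onD)
  then have "0 < inner (f 0 - f 1) (f 0 - f 1)" by simp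
  also have "inner (f 0 - f 1) (f 0 - f 1) = 2 - 2 * Re \<alpha>"
    using two_le_n
    by (simp add: inner_diff_left inner_diff_right inner_frame inner_commute[of "f 1" "f 0"] P_def)
  finally show ?thesis by simp
qed

lemma sum_P: "l < n \<Longrightarrow> (\<Sum>k<n. P l k) = 1 - Re \<alpha> + n * Re \<alpha>"
  unfolding P_def using sum_lessThan_if_eq[of l n "1::real" "Re \<alpha>"] two_le_n
  by (simp add: of_nat_diff algebra_simps)

lemma inner_frame_combination:
  assumes "m \<le> n"
  shows "inner (\<Sum>j<m. w j *\<^sub>R f j) (\<Sum>j<m. w j *\<^sub>R f j)
       = (1 - Re \<alpha>) * (\<Sum>j<m. (w j)\<^sup>2) + Re \<alpha> * (\<Sum>j<m. w j)\<^sup>2"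
proof -
  have "inner (\<Sum>j<m. w j *\<^sub>R f j) (\<Sum>j<m. w j *\<^sub>R f j)
      = (\<Sum>j<m. \<Sum>k<m. w j * (w k * P k j))"
    using assms by (simp add: inner_sum_left inner_sum_right inner_frame sum_distrib_left)
  also have "\<dots> = (\<Sum>j<m. \<Sum>k<m. Re \<alpha> * (w j * w k) + (if j = k then (1 - Re \<alpha>) * (w j)\<^sup>2 else 0))"
    by (intro sum.cong refl) (auto simp: P_def algebra_simps power2_eq_square)
  also have "\<dots> = Re \<alpha> * (\<Sum>j<m. \<Sum>k<m. w j * w k) + (\<Sum>j<m. (1 - Re \<alpha>) * (w j)\<^sup>2)"
    by (simp add: sum.distrib sum_distrib_left)
  also have "(\<Sum>j<m. \<Sum>k<m. w j * w k) = (\<Sum>j<m. w j)\<^sup>2"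
    by (simp add: power2_eq_square sum_product)
  finally show ?thesis by (simp add: sum_distrib_left)
qed

lemma independent_frame_prefix:
  assumes m: "m \<le> n" and pos: "0 < 1 - Re \<alpha> + m * Re \<alpha>"
  shows "independent (f ` {..<m})"
proof
  assume "dependent (f ` {..<m})"
  then obtain u where u: "\<exists>v\<in>f ` {..<m}. u v \<noteq> 0" "(\<Sum>v\<in>f ` {..<m}. u v *\<^sub>R v) = 0"
    by (auto simp: dependent_finite)
  have inj_m: "inj_on f {..<m}" using inj m by (auto intro: inj_on_subset)
  define w where "w j = u (f j)" for j
  have "(\<Sum>j<m. w j *\<^sub>R f j) = 0"
    using u(2) by (simp add: sum.reindex[OF inj_m] w_def)
  then have quad: "(1 - Re \<alpha>) * (\<Sum>j<m. (w j)\<^sup>2) + Re \<alpha> * (\<Sum>j<m. w j)\<^sup>2 = 0"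
    using inner_frame_combination[OF m, of w] by simp
  obtain j0 where j0: "j0 < m" "w j0 \<noteq> 0" using u(1) by (auto simp: w_def)
  have "0 < (w j0)\<^sup>2" using j0 by simp
  also have "(w j0)\<^sup>2 \<le> (\<Sum>j<m. (w j)\<^sup>2)"
    using j0 by (intro member_le_sum) auto
  finally have sq_pos: "0 < (\<Sum>j<m. (w j)\<^sup>2)" .
  show False
  proof (cases "Re \<alpha> \<ge> 0")
    case True
    have "0 < (1 - Re \<alpha>) * (\<Sum>j<m. (w j)\<^sup>2)" using Re_alpha_less_1 sq_pos by simp
    moreover have "0 \<le> Re \<alpha> * (\<Sum>j<m. w j)\<^sup>2" using True by simp
    ultimately show False using quad by linarith
  next
    case False
    have "(\<Sum>j<m. w j)\<^sup>2 \<le> (\<Sum>j<m. (w j)\<^sup>2) * m"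
      using sum_squared_le_sum_of_squares[of w "{..<m}"] by simp
    then have "Re \<alpha> * ((\<Sum>j<m. (w j)\<^sup>2) * m) \<le> Re \<alpha> * (\<Sum>j<m. w j)\<^sup>2"
      using False by (intro mult_left_mono_neg) auto
    moreover have "0 < (1 - Re \<alpha> + m * Re \<alpha>) * (\<Sum>j<m. (w j)\<^sup>2)" using pos sq_pos by simp
    ultimately show False using quad by (simp add: algebra_simps)
  qed
qed

lemma frame_orthogonal_eq_0:
  assumes m: "m \<le> n" and ind: "independent (f ` {..<m})" and dim: "m = DIM(complex^'n)"
    and orth: "\<forall>l<n. inner (f l) v = 0"
  shows "v = 0"
proof -
  have "inj_on f {..<m}" using inj m by (auto intro: inj_on_subset)
  then have "card (f ` {..<m}) = dim (UNIV :: (complex^'n) set)"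
    using dim by (simp add: card_image dim_UNIV)
  then have "v \<in> span (f ` {..<m})"
    using card_eq_dim[of "f ` {..<m}" UNIV] ind by auto
  moreover have "\<And>y. y \<in> f ` {..<m} \<Longrightarrow> orthogonal v y"
    using orth m by (auto simp: orthogonal_def inner_commute)
  ultimately have "orthogonal v v" by (rule orthogonal_to_span)
  then show "v = 0" by (simp add: orthogonal_def)
qed

lemma r_parity:
  assumes "j < n"
  shows "even (r j - int n + 1)"
proof -
  have "r j = (\<Sum>k\<in>{..<n}-{j}. S j k)"
    unfolding r_def using assms by (subst sum.remove[of _ j]) auto
  moreover have "card ({..<n}-{j}) = n - 1" using assms by simp
  moreover have "even ((\<Sum>k\<in>{..<n}-{j}. S j k) - int (card ({..<n}-{j})))"
    by (rule even_sum_signs_minus_card) (use S_sign[of j] in auto)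
  ultimately show ?thesis using assms by (simp add: of_nat_diff)
qed

lemma column_sum_S: "j < n \<Longrightarrow> (\<Sum>k<n. S k j) = - r j"
  unfolding r_def by (simp add: S_skew[of j] sum_negf)

lemma sum_r_eq_0: "(\<Sum>j<n. r j) = 0"
proof -
  have "(\<Sum>j<n. r j) = (\<Sum>k<n. \<Sum>j<n. S j k)" unfolding r_def by (rule sum.swap)
  also have "\<dots> = - (\<Sum>j<n. r j)" by (simp add: column_sum_S sum_negf)
  finally show ?thesis by simp
qed

lemma T_diag:
  assumes "l < n"
  shows "T l l = - int (n - 1)"
proof -
  have "S l k * S k l = (if l = k then 0 else -1)" if "k < n" for k
    using S_skew[OF assms that] S_sign[of l k] by auto
  then have "T l l = (\<Sum>k<n. if l = k then 0 else -1)"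
    unfolding T_def by (intro sum.cong) auto
  then show ?thesis using sum_lessThan_if_eq[OF assms, of 0 "-1::int"] by simp
qed

lemma rows_S_eq_minus_T: "i < n \<Longrightarrow> j < n \<Longrightarrow> (\<Sum>k<n. S i k * S j k) = - T i j"
  unfolding T_def by (simp add: S_skew[of j] sum_negf)

text \<open>For \<open>k \<noteq> l, j\<close> each product \<open>(1 + S l k) * (1 + S j k)\<close> is 0 or 4.\<close>

lemma four_dvd_T:
  assumes l: "l < n" and j: "j < n" and "l \<noteq> j"
  shows "4 dvd (int n - 2 + r l + r j - T l j)"
proof -
  define F where "F k = (1 + S l k) * (1 + S j k)" for k
  define K where "K = {..<n} - {l, j}"
  have "4 dvd (\<Sum>k\<in>K. F k)"
  proof (rule dvd_sum)
    fix k assume "k \<in> K"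
    then have "k \<noteq> l" "k \<noteq> j" by (auto simp: K_def)
    then show "4 dvd F k" using S_sign[of l k] S_sign[of j k] by (auto simp: F_def)
  qed
  moreover have "(\<Sum>k<n. F k) = F l + (F j + (\<Sum>k\<in>K. F k))"
  proof -
    have "(\<Sum>k<n. F k) = F l + (\<Sum>k\<in>{..<n}-{l}. F k)"
      using l by (subst sum.remove[of _ l]) auto
    also have "(\<Sum>k\<in>{..<n}-{l}. F k) = F j + (\<Sum>k\<in>K. F k)"
      using j \<open>l \<noteq> j\<close> unfolding K_def
      by (subst sum.remove[of _ j]) (auto simp: Diff_insert2[symmetric] insert_commute)
    finally show ?thesis .
  qed
  moreover have "F l + F j = 2" using S_skew[OF l j] by (simp add: F_def)
  moreover have "F k = 1 + S l k + S j k - S l k * S k j" if "k < n" for k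
    using S_skew[OF j that] unfolding F_def by (simp add: algebra_simps)
  then have "(\<Sum>k<n. F k) = int n + r l + r j - T l j"
    by (simp add: r_def T_def sum.distrib sum_subtractf)
  ultimately have "(\<Sum>k\<in>K. F k) = int n - 2 + r l + r j - T l j" and "4 dvd (\<Sum>k\<in>K. F k)"
    by linarith+
  then show ?thesis by simp
qed

lemma sum_S_P:
  assumes l: "l < n" and j: "j < n"
  shows "(\<Sum>k<n. of_int (S k j) * P l k) = (1 - Re \<alpha>) * of_int (S l j) - Re \<alpha> * of_int (r j)"
proof -
  have "(\<Sum>k<n. of_int (S k j) * P l k)
      = (\<Sum>k<n. Re \<alpha> * of_int (S k j) + (if l = k then (1 - Re \<alpha>) * of_int (S k j) else 0))"
    by (intro sum.cong refl) (auto simp: P_def algebra_simps)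
  also have "\<dots> = Re \<alpha> * of_int (\<Sum>k<n. S k j) + (1 - Re \<alpha>) * of_int (S l j)"
    using l by (simp add: sum.distrib sum_distrib_left)
  finally show ?thesis using column_sum_S[OF j] by simp
qed

text \<open>
  If the frame vectors span \<open>\<real>\<^sup>2\<^sup>d\<close>, the vector \<open>z\<close> below is zero, being orthogonal to
  all of them; its imaginary inner products with the frame then give the relation.
  The parameter \<open>\<beta>\<close> is \<open>Re \<alpha> / (1 - Re \<alpha> + n Re \<alpha>)\<close> whenever the denominator is nonzero.
\<close>

lemma gram_relation:
  fixes \<beta> :: real
  assumes spanning: "\<And>v. \<forall>l<n. inner (f l) v = 0 \<Longrightarrow> v = 0"
    and \<beta>: "\<And>j. j < n \<Longrightarrow> \<beta> * (1 - Re \<alpha> + n * Re \<alpha>) * r j = Re \<alpha> * r j"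
    and l: "l < n" and j: "j < n"
  shows "of_int (T l j) + \<beta> * r l * r j = - ((1 - Re \<alpha>) / (Im \<alpha>)\<^sup>2) * P l j"
proof -
  define a where "a = Re \<alpha>"
  define b where "b = Im \<alpha>"
  define c where "c = 1 - a"
  have b0: "b > 0" using Im_alpha_pos by (simp add: b_def)
  have c0: "c > 0" using Re_alpha_less_1 by (simp add: c_def a_def)
  define z where "z = \<i> *s f j + complex_of_real (b/c) *s
      ((\<Sum>k<n. complex_of_int (S k j) *s f k) + complex_of_real (\<beta> * r j) *s (\<Sum>k<n. f k))"
  have herm_ip_z: "herm_ip (f l') z = Complex
        (- b * S l' j + (b/c) * ((\<Sum>k<n. of_int (S k j) * P l' k) + \<beta> * r j * (\<Sum>k<n. P l' k)))
        (P l' j + (b/c) * ((\<Sum>k<n. of_int (S k j) * (b * of_int (S l' k)))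
           + \<beta> * r j * (\<Sum>k<n. b * of_int (S l' k))))"
    if l': "l' < n" for l'
  proof -
    have "herm_ip (f l') z = \<i> * herm_ip (f l') (f j) + complex_of_real (b/c) *
        ((\<Sum>k<n. complex_of_int (S k j) * herm_ip (f l') (f k))
          + complex_of_real (\<beta> * r j) * (\<Sum>k<n. herm_ip (f l') (f k)))"
      by (simp add: z_def herm_ip_add_right herm_ip_scale_right herm_ip_sum_right distrib_left
          add_divide_distrib)
    also have "(\<Sum>k<n. complex_of_int (S k j) * herm_ip (f l') (f k))
        = (\<Sum>k<n. Complex (of_int (S k j) * P l' k) (of_int (S k j) * (b * of_int (S l' k))))"
      using l' by (intro sum.cong refl) (simp add: herm_ip_frame b_def complex_eq_iff)
    also have "(\<Sum>k<n. herm_ip (f l') (f k)) = (\<Sum>k<n. Complex (P l' k) (b * of_int (S l' k)))"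
      using l' by (intro sum.cong refl) (simp add: herm_ip_frame b_def)
    finally show ?thesis
      using l' j by (simp add: herm_ip_frame complex_eq_iff Re_sum Im_sum b_def algebra_simps)
  qed
  have "inner (f l') z = 0" if l': "l' < n" for l'
  proof -
    have "inner (f l') z = - b * S l' j + (b/c) * (((1 - a) * S l' j - a * r j)
        + \<beta> * r j * (1 - a + n * a))"
      using l' j by (simp add: inner_eq_Re_herm_ip herm_ip_z sum_S_P sum_P a_def)
    also have "\<dots> = 0"
      using \<beta>[OF j] c0 by (simp add: c_def a_def field_simps)
    finally show ?thesis .
  qed
  then have "z = 0" using spanning by blast
  then have "Im (herm_ip (f l) z) = 0" by simp
  then have "P l j + (b/c) * (b * of_int (T l j) + \<beta> * r j * (b * r l)) = 0"
    using l by (simp add: herm_ip_z T_def r_def mult.commute sum_distrib_left[symmetric]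
        mult.left_commute[of _ b])
  then show ?thesis using b0 c0 by (simp add: c_def a_def b_def field_simps power2_eq_square)
qed

lemma inner_sum_frame: "inner (\<Sum>k<n. f k) (\<Sum>k<n. f k) = n * (1 - Re \<alpha> + n * Re \<alpha>)"
  using inner_frame_combination[of n "\<lambda>_. 1"] by (simp add: power2_eq_square algebra_simps)

lemma weight_nonneg: "0 \<le> 1 - Re \<alpha> + n * Re \<alpha>"
proof -
  have "0 \<le> n * (1 - Re \<alpha> + n * Re \<alpha>)" using inner_sum_frame[symmetric] by simp
  then show ?thesis using two_le_n by (simp add: zero_le_mult_iff)
qed

lemma r_eq_0_if_weight_eq_0:
  assumes A: "1 - Re \<alpha> + n * Re \<alpha> = 0" and j: "j < n"
  shows "r j = 0"
proof -
  have "(\<Sum>k<n. f k) = 0" using inner_sum_frame A by simp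
  then have "Im (\<Sum>k<n. herm_ip (f k) (f j)) = 0" by (simp flip: herm_ip_sum_left)
  moreover have "Im (\<Sum>k<n. herm_ip (f k) (f j)) = Im \<alpha> * of_int (\<Sum>k<n. S k j)"
    using j by (simp add: Im_sum herm_ip_frame sum_distrib_left)
  ultimately have "(\<Sum>k<n. S k j) = 0" using Im_alpha_pos by (simp flip: of_int_sum)
  then show ?thesis using column_sum_S[OF j] by simp
qed

lemma odd_n_if_weight_eq_0:
  assumes "1 - Re \<alpha> + n * Re \<alpha> = 0"
  shows "odd n"
  using r_parity[of 0] r_eq_0_if_weight_eq_0[OF assms, of 0] two_le_n by simp

lemma sum_T_row: "(\<Sum>j<n. T l j) = (\<Sum>k<n. S l k * r k)"
proof -
  have "(\<Sum>j<n. T l j) = (\<Sum>k<n. \<Sum>j<n. S l k * S k j)"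
    unfolding T_def by (rule sum.swap)
  then show ?thesis by (simp add: r_def sum_distrib_left)
qed

context
  fixes \<beta> \<gamma> :: real
  assumes relation: "\<And>l j. l < n \<Longrightarrow> j < n \<Longrightarrow> of_int (T l j) + \<beta> * r l * r j = - \<gamma> * P l j"
begin

lemma sum_T_row_relation:
  assumes l: "l < n"
  shows "(\<Sum>j<n. real_of_int (T l j)) = - \<gamma> * (1 - Re \<alpha> + n * Re \<alpha>)"
proof -
  have "(\<Sum>j<n. of_int (T l j) + \<beta> * r l * r j) = (\<Sum>j<n. - \<gamma> * P l j)"
    using relation l by (intro sum.cong) auto
  then have "(\<Sum>j<n. real_of_int (T l j)) + \<beta> * r l * of_int (\<Sum>j<n. r j) = - \<gamma> * (\<Sum>j<n. P l j)"
    by (simp add: sum.distrib sum_distrib_left)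
  then show ?thesis using sum_r_eq_0 sum_P[OF l] by simp
qed

lemma beta_sum_r_squared:
  assumes "r 0 \<noteq> 0"
  shows "\<beta> * (\<Sum>j<n. real_of_int (r j) * r j) = \<gamma> * n * Re \<alpha>"
proof -
  have n0: "0 < n" using two_le_n by simp
  have "(\<Sum>j<n. T 0 j * r j) = (\<Sum>j<n. \<Sum>k<n. S 0 k * (S k j * r j))"
    by (simp add: T_def sum_distrib_right mult.assoc)
  also have "\<dots> = (\<Sum>k<n. \<Sum>j<n. S 0 k * (S k j * r j))"
    by (rule sum.swap)
  also have "\<dots> = (\<Sum>k<n. S 0 k * (\<Sum>j<n. T k j))"
    by (simp add: sum_T_row sum_distrib_left mult.assoc)
  finally have "(\<Sum>j<n. real_of_int (T 0 j) * r j) = (\<Sum>k<n. of_int (S 0 k) * (\<Sum>j<n. real_of_int (T k j)))"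
    by (metis (no_types, lifting) of_int_mult of_int_sum sum.cong)
  also have "\<dots> = (\<Sum>k<n. of_int (S 0 k) * (- \<gamma> * (1 - Re \<alpha> + n * Re \<alpha>)))"
    by (intro sum.cong) (simp_all add: sum_T_row_relation)
  also have "\<dots> = - \<gamma> * (1 - Re \<alpha> + n * Re \<alpha>) * r 0"
    by (simp add: r_def sum_distrib_right mult.commute sum_negf)
  finally have Tr: "(\<Sum>j<n. real_of_int (T 0 j) * r j) = - \<gamma> * (1 - Re \<alpha> + n * Re \<alpha>) * r 0" .
  have "(\<Sum>j<n. P 0 j * r j) = (\<Sum>j<n. Re \<alpha> * r j + (if 0 = j then (1 - Re \<alpha>) * r j else 0))"
    by (intro sum.cong refl) (auto simp: P_def algebra_simps)
  also have "\<dots> = Re \<alpha> * of_int (\<Sum>j<n. r j) + (1 - Re \<alpha>) * r 0"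
    using n0 by (simp add: sum.distrib sum_distrib_left)
  finally have Pr: "(\<Sum>j<n. P 0 j * r j) = (1 - Re \<alpha>) * r 0" using sum_r_eq_0 by simp
  have "(\<Sum>j<n. (of_int (T 0 j) + \<beta> * r 0 * r j) * r j) = (\<Sum>j<n. (- \<gamma> * P 0 j) * r j)"
    using relation n0 by (intro sum.cong) auto
  then have "(\<Sum>j<n. real_of_int (T 0 j) * r j) + \<beta> * r 0 * (\<Sum>j<n. real_of_int (r j) * r j)
      = - \<gamma> * (\<Sum>j<n. P 0 j * r j)"
    by (simp add: sum.distrib distrib_right sum_distrib_left mult.assoc)
  then have "r 0 * (\<beta> * (\<Sum>j<n. real_of_int (r j) * r j) - \<gamma> * n * Re \<alpha>) = 0"
    unfolding Tr Pr by (simp add: algebra_simps)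
  then show ?thesis using assms by simp
qed

text \<open>
  If \<open>\<beta> \<noteq> 0\<close>, the diagonal of the relation makes all \<open>r j\<close> equal up to sign, and since
  they sum to 0 some \<open>r j = - r 0\<close>; then \<open>T 0 j = 0\<close>, contradicting \<open>four_dvd_T\<close>
  because \<open>4\<close> divides \<open>n\<close>.
\<close>

lemma beta_eq_0:
  assumes four_dvd_n: "4 dvd n"
  shows "\<beta> = 0"
proof (rule ccontr)
  assume \<beta>: "\<beta> \<noteq> 0"
  have n0: "0 < n" using two_le_n by simp
  have "even n" using four_dvd_n dvd_trans[of 2 4 n] by simp
  then have r_nonzero: "r l \<noteq> 0" if "l < n" for l
    using r_parity[OF that] by auto
  have diag: "\<beta> * (r l * r l) = n - 1 - \<gamma>" if "l < n" for l
    using relation[OF that that] T_diag[OF that] two_le_n by (simp add: P_def of_nat_diff algebra_simps)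
  have r_sq: "real_of_int (r l) * r l = real_of_int (r 0) * r 0" if "l < n" for l
  proof -
    have "\<beta> * (real_of_int (r l) * r l) = \<beta> * (r 0 * r 0)"
      using diag[OF that] diag[OF n0] by simp
    then show ?thesis using \<beta> by simp
  qed
  have "(\<Sum>j<n. real_of_int (r j) * r j) = (\<Sum>j<n. real_of_int (r 0) * r 0)"
    by (rule sum.cong[OF refl], rule r_sq) simp
  then have "(\<Sum>j<n. real_of_int (r j) * r j) = n * (r 0 * r 0)"
    by simp
  with beta_sum_r_squared[OF r_nonzero[OF n0]] n0
  have \<beta>_r0: "\<beta> * (r 0 * r 0) = \<gamma> * Re \<alpha>" by (simp add: algebra_simps)
  obtain j where j: "j < n" "r j \<noteq> r 0"
  proof (rule ccontr)
    assume "\<not> thesis"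
    then have "(\<Sum>j<n. r j) = (\<Sum>j<n. r 0)" using that by (intro sum.cong) auto
    then show False using sum_r_eq_0 r_nonzero[OF n0] n0 by simp
  qed
  have "r j * r j = r 0 * r 0" using r_sq[OF j(1)] by (simp flip: of_int_mult)
  then have rj: "r j = - r 0" using j(2) by (simp add: square_eq_iff)
  have "0 \<noteq> j" using j(2) by metis
  then have "real_of_int (T 0 j) = 0"
    using relation[OF n0 j(1)] \<beta>_r0 rj by (simp add: P_def algebra_simps)
  then have "4 dvd (int n - 2)" using four_dvd_T[OF n0 j(1) \<open>0 \<noteq> j\<close>] rj by simp
  then show False using four_dvd_n by presburger
qed

end

lemma card_le_two_dim_if_weight_pos:
  assumes "0 < 1 - Re \<alpha> + n * Re \<alpha>"
  shows "n \<le> 2 * CARD('n)"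
proof -
  have "card (f ` {..<n}) \<le> DIM(complex^'n)"
    using independent_frame_prefix[OF le_refl assms] independent_bound by blast
  then show ?thesis using card_image[OF inj] by simp
qed

text \<open>
  A zero weight forces \<open>r = 0\<close> and \<open>Re \<alpha> < 0\<close>, so any \<open>n - 1\<close> frame vectors are independent;
  for \<open>n = 2d + 1\<close> they span, and the relation with \<open>\<beta> = 0\<close> yields \<open>T 0 1 = 1\<close>, against
  \<open>four_dvd_T\<close>.
\<close>

lemma card_le_two_dim_if_weight_eq_0:
  assumes ev: "even CARD('n)" and A: "1 - Re \<alpha> + n * Re \<alpha> = 0"
  shows "n \<le> 2 * CARD('n)"
proof -
  have r0: "r j = 0" if "j < n" for j using r_eq_0_if_weight_eq_0[OF A that] .
  have "Re \<alpha> < 0"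
    using A Re_alpha_less_1 by (smt (verit) mult_nonneg_nonneg of_nat_0_le_iff)
  then have "0 < 1 - Re \<alpha> + real (n - 1) * Re \<alpha>"
    using A two_le_n by (simp add: of_nat_diff algebra_simps)
  then have ind: "independent (f ` {..<n-1})" using independent_frame_prefix by simp
  have "inj_on f {..<n-1}" using inj by (auto intro: inj_on_subset)
  then have le: "n - 1 \<le> 2 * CARD('n)"
    using independent_bound[OF ind] by (simp add: card_image)
  show ?thesis
  proof (rule ccontr)
    assume "\<not> n \<le> 2 * CARD('n)"
    then have dim: "n - 1 = DIM(complex^'n)" using le by simp
    have relation: "of_int (T l j) + 0 * r l * r j = - ((1 - Re \<alpha>) / (Im \<alpha>)\<^sup>2) * P l j"
      if "l < n" "j < n" for l j
      using gram_relation[OF frame_orthogonal_eq_0[OF _ ind dim] _ that, of 0] r0 by simp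
    have \<gamma>: "(1 - Re \<alpha>) / (Im \<alpha>)\<^sup>2 = real (n - 1)"
      using relation[of 0 0] T_diag[of 0] two_le_n by (simp add: P_def)
    have "real_of_int (T 0 1) = - ((1 - Re \<alpha>) / (Im \<alpha>)\<^sup>2) * Re \<alpha>"
      using relation[of 0 1] two_le_n by (simp add: P_def)
    also have "\<dots> = - (real (n - 1) * Re \<alpha>)" unfolding \<gamma> by simp
    also have "real (n - 1) * Re \<alpha> = -1"
      using A two_le_n by (simp add: of_nat_diff algebra_simps)
    finally have "T 0 1 = 1" by simp
    then have "4 dvd (int n - 3)" using four_dvd_T[of 0 1] r0[of 0] r0[of 1] two_le_n by simp
    moreover have "n = 2 * CARD('n) + 1" using dim two_le_n by simp
    ultimately show False using ev by presburger
  qed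
qed

lemma card_le_two_dim:
  assumes "even CARD('n)"
  shows "n \<le> 2 * CARD('n)"
  using card_le_two_dim_if_weight_pos card_le_two_dim_if_weight_eq_0[OF assms] weight_nonneg
  by fastforce

lemma rows_S_orthogonal:
  assumes ev: "even CARD('n)" and n: "n = 2 * CARD('n)" and i: "i < n" and j: "j < n"
  shows "(\<Sum>k<n. S i k * S j k) = (if i = j then int n - 1 else 0)"
proof -
  define A where "A = 1 - Re \<alpha> + n * Re \<alpha>"
  define \<gamma> where "\<gamma> = (1 - Re \<alpha>) / (Im \<alpha>)\<^sup>2"
  have "A \<noteq> 0" using odd_n_if_weight_eq_0 n by (auto simp: A_def)
  then have A_pos: "A > 0" using weight_nonneg by (simp add: A_def)
  then have "independent (f ` {..<n})" using independent_frame_prefix[OF le_refl] by (simp add: A_def)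
  then have spanning: "\<And>v. \<forall>l<n. inner (f l) v = 0 \<Longrightarrow> v = 0"
    using frame_orthogonal_eq_0[OF le_refl] n by simp
  have "Re \<alpha> / A * (1 - Re \<alpha> + n * Re \<alpha>) * r j = Re \<alpha> * r j" for j
    using A_pos by (simp add: A_def)
  then have relation: "of_int (T l j) + Re \<alpha> / A * r l * r j = - \<gamma> * P l j"
    if "l < n" "j < n" for l j
    using gram_relation[where \<beta> = "Re \<alpha> / A", OF spanning _ that] unfolding \<gamma>_def by blast
  have "4 dvd n" using ev n by auto
  then have "Re \<alpha> / A = 0" using beta_eq_0[OF relation] by blast
  then have "Re \<alpha> = 0" using A_pos by simp
  then have "i \<noteq> j \<Longrightarrow> T i j = 0" using relation[OF i j] by (simp add: P_def)
  then show ?thesis using rows_S_eq_minus_T[OF i j] T_diag[OF i] i two_le_n by (auto simp: of_nat_diff)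
qed

end

section \<open>Eigenspaces of real skew matrices\<close>

definition herm_orthonormal :: "nat \<Rightarrow> (nat \<Rightarrow> complex^'m::finite) \<Rightarrow> bool" where
  "herm_orthonormal r e \<longleftrightarrow> (\<forall>t<r. \<forall>s<r. herm_ip (e t) (e s) = (if t = s then 1 else 0))"

lemma herm_ip_orthonormal_expansion:
  assumes "herm_orthonormal r u"
  shows "herm_ip (\<Sum>t<r. a t *s u t) (\<Sum>s<r. b s *s u s) = (\<Sum>t<r. cnj (a t) * b t)"
proof -
  have "herm_ip (\<Sum>t<r. a t *s u t) (\<Sum>s<r. b s *s u s)
      = (\<Sum>t<r. \<Sum>s<r. b s * (cnj (a t) * herm_ip (u t) (u s)))"
    by (simp add: herm_ip_sum_left herm_ip_sum_right herm_ip_scale_left herm_ip_scale_right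
        sum_distrib_left) (rule sum.swap)
  also have "\<dots> = (\<Sum>t<r. \<Sum>s<r. if t = s then cnj (a t) * b t else 0)"
    using assms by (intro sum.cong refl) (auto simp: herm_orthonormal_def mult.commute)
  finally show ?thesis by simp
qed

lemma herm_ip_orthogonal_projection:
  assumes "herm_orthonormal r e" and "t < r"
  shows "herm_ip (e t) (v - (\<Sum>s<r. herm_ip (e s) v *s e s)) = 0"
proof -
  have "herm_ip (e t) (\<Sum>s<r. herm_ip (e s) v *s e s) = (\<Sum>s<r. herm_ip (e s) v * herm_ip (e t) (e s))"
    by (simp add: herm_ip_sum_right herm_ip_scale_right)
  also have "\<dots> = (\<Sum>s<r. if t = s then herm_ip (e s) v else 0)"
    using assms by (intro sum.cong refl) (auto simp: herm_orthonormal_def)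
  finally show ?thesis using assms(2) by (simp add: herm_ip_diff_right)
qed

lemma herm_orthonormal_extend:
  assumes e: "herm_orthonormal r e" and "u \<noteq> 0" and u: "\<And>t. t < r \<Longrightarrow> herm_ip (e t) u = 0"
  shows "herm_orthonormal (Suc r) (e(r := complex_of_real (1 / norm u) *s u))"
proof -
  have uu: "herm_ip u u = complex_of_real (norm u * norm u)"
    using herm_ip_self_eq_inner[of u] by (simp add: dot_square_norm power2_eq_square)
  have u': "herm_ip u (e t) = 0" if "t < r" for t
    using u[OF that] herm_ip_cnj[of u "e t"] by simp
  show ?thesis
    unfolding herm_orthonormal_def
    using e \<open>u \<noteq> 0\<close> uu u u'
    by (auto simp: herm_orthonormal_def less_Suc_eq herm_ip_scale_left herm_ip_scale_right
        field_simps)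
qed

lemma herm_gram_schmidt:
  fixes v :: "nat \<Rightarrow> complex^'m::finite"
  assumes zero: "0 \<in> V" and add: "\<And>x y. x \<in> V \<Longrightarrow> y \<in> V \<Longrightarrow> x + y \<in> V"
    and scale: "\<And>c x. x \<in> V \<Longrightarrow> c *s x \<in> V"
    and v: "\<forall>j<N. v j \<in> V"
  shows "\<exists>r e c. herm_orthonormal r e \<and> (\<forall>t<r. e t \<in> V) \<and> (\<forall>j<N. v j = (\<Sum>t<r. c t j *s e t))"
  using v
proof (induction N)
  case 0
  show ?case by (rule exI[of _ 0]) (simp add: herm_orthonormal_def)
next
  case (Suc N)
  then obtain r e c where e: "herm_orthonormal r e" and eV: "\<forall>t<r. e t \<in> V"
    and v_eq: "\<forall>j<N. v j = (\<Sum>t<r. c t j *s e t)"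
    by auto
  define h where "h t = herm_ip (e t) (v N)" for t
  define u where "u = v N - (\<Sum>t<r. h t *s e t)"
  have v_N: "v N = (\<Sum>t<r. h t *s e t) + u" by (simp add: u_def)
  have "(\<Sum>t<r. h t *s e t) \<in> V"
    using eV by (induction r) (auto intro: zero add scale)
  then have "- (\<Sum>t<r. h t *s e t) \<in> V"
    using scale[of _ "-1"] by simp
  moreover have "v N \<in> V" using Suc.prems by simp
  ultimately have "u \<in> V" unfolding u_def diff_conv_add_uminus by (rule add[rotated])
  show ?case
  proof (cases "u = 0")
    case True
    show ?thesis
      using e eV v_eq v_N True
      by (intro exI[of _ r] exI[of _ e] exI[of _ "\<lambda>t j. if j = N then h t else c t j"])
        (auto simp: less_Suc_eq)
  next
    case False
    define e' where "e' = e(r := complex_of_real (1 / norm u) *s u)"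
    define c' where "c' t j = (if t = r then (if j = N then complex_of_real (norm u) else 0)
        else if j = N then h t else c t j)" for t j
    have "herm_orthonormal (Suc r) e'"
      unfolding e'_def using e False
      by (rule herm_orthonormal_extend) (use herm_ip_orthogonal_projection[OF e] in \<open>simp add: u_def h_def\<close>)
    moreover have "\<forall>t<Suc r. e' t \<in> V"
      using eV \<open>u \<in> V\<close> scale by (auto simp: e'_def less_Suc_eq)
    moreover have "v j = (\<Sum>t<Suc r. c' t j *s e' t)" if "j < Suc N" for j
      using that v_eq v_N False
      by (auto simp: less_Suc_eq c'_def e'_def vector_smult_assoc)
    ultimately show ?thesis by blast
  qed
qed

definition vconj :: "complex^'m::finite \<Rightarrow> complex^'m" where
  "vconj y = (\<chi> p. cnj (y $ p))"

definition real_mat_mult :: "('m::finite \<Rightarrow> 'm \<Rightarrow> real) \<Rightarrow> complex^'m \<Rightarrow> complex^'m" where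
  "real_mat_mult M y = (\<chi> p. \<Sum>q\<in>UNIV. complex_of_real (M p q) * y $ q)"

lemma herm_ip_vconj: "herm_ip (vconj x) (vconj y) = cnj (herm_ip x y)"
  by (simp add: herm_ip_def vconj_def)

lemma vconj_scale: "vconj (a *s y) = cnj a *s vconj y"
  by (simp add: vconj_def vec_eq_iff)

lemma real_mat_mult_zero: "real_mat_mult M 0 = 0"
  by (simp add: real_mat_mult_def vec_eq_iff)

lemma real_mat_mult_add: "real_mat_mult M (x + y) = real_mat_mult M x + real_mat_mult M y"
  by (simp add: real_mat_mult_def vec_eq_iff distrib_left sum.distrib)

lemma real_mat_mult_scale: "real_mat_mult M (a *s y) = a *s real_mat_mult M y"
  by (simp add: real_mat_mult_def vec_eq_iff sum_distrib_left algebra_simps)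

lemma real_mat_mult_vconj: "real_mat_mult M (vconj y) = vconj (real_mat_mult M y)"
  by (simp add: real_mat_mult_def vconj_def vec_eq_iff)

lemma herm_ip_real_mat_mult_skew:
  assumes skew: "\<And>p q. M q p = - M p q"
  shows "herm_ip u (real_mat_mult M w) = - herm_ip (real_mat_mult M u) w"
proof -
  have "herm_ip u (real_mat_mult M w)
      = (\<Sum>p\<in>UNIV. \<Sum>q\<in>UNIV. complex_of_real (M p q) * (cnj (u $ p) * w $ q))"
    by (simp add: herm_ip_def real_mat_mult_def sum_distrib_left algebra_simps)
  also have "\<dots> = (\<Sum>q\<in>UNIV. \<Sum>p\<in>UNIV. complex_of_real (M p q) * (cnj (u $ p) * w $ q))"
    by (rule sum.swap)
  also have "\<dots> = (\<Sum>q\<in>UNIV. \<Sum>p\<in>UNIV. - complex_of_real (M q p) * (cnj (u $ p) * w $ q))"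
  proof -
    have m: "complex_of_real (M p q) = - complex_of_real (M q p)" for p q
      using skew[of q p] by simp
    show ?thesis by (subst m) (rule refl)
  qed
  also have "\<dots> = - herm_ip (real_mat_mult M u) w"
    by (simp add: herm_ip_def real_mat_mult_def sum_distrib_right sum_distrib_left cnj_sum
        sum_negf algebra_simps)
  finally show ?thesis .
qed

lemma herm_ip_vconj_eigenvectors:
  assumes skew: "\<And>p q. M q p = - M p q" and "\<mu> \<noteq> 0"
    and e: "real_mat_mult M e = \<mu> *s e" and e': "real_mat_mult M e' = \<mu> *s e'"
  shows "herm_ip (vconj e) e' = 0"
proof -
  have "\<mu> * herm_ip (vconj e) e' = herm_ip (vconj e) (real_mat_mult M e')"
    by (simp add: e' herm_ip_scale_right)
  also have "\<dots> = - herm_ip (real_mat_mult M (vconj e)) e'"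
    by (rule herm_ip_real_mat_mult_skew[OF skew])
  also have "\<dots> = - (\<mu> * herm_ip (vconj e) e')"
    by (simp add: real_mat_mult_vconj e vconj_scale herm_ip_scale_left)
  finally show ?thesis using \<open>\<mu> \<noteq> 0\<close> by simp
qed

lemma card_le_DIM_if_orthonormal:
  fixes g :: "'i \<Rightarrow> 'v::euclidean_space"
  assumes "finite I" and orth: "\<And>p q. p \<in> I \<Longrightarrow> q \<in> I \<Longrightarrow> inner (g p) (g q) = (if p = q then 1 else 0)"
  shows "card I \<le> DIM('v)"
proof -
  have "inj_on g I"
    by (rule inj_onI) (metis orth inner_zero_left zero_neq_one)
  have "pairwise orthogonal (g ` I)"
    using orth by (auto simp: pairwise_def orthogonal_def)
  moreover have "0 \<notin> g ` I"
    using orth by force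
  ultimately have "independent (g ` I)" by (rule pairwise_orthogonal_independent)
  then have "card (g ` I) \<le> DIM('v)" using independent_bound by blast
  then show ?thesis using card_image[OF \<open>inj_on g I\<close>] by simp
qed

text \<open>
  The vectors \<open>e t\<close>, \<open>\<i> e t\<close>, \<open>vconj (e t)\<close>, \<open>\<i> vconj (e t)\<close> are orthonormal for the real
  inner product of \<open>\<complex>\<^sup>m = \<real>\<^sup>2\<^sup>m\<close>.
\<close>

lemma herm_orthonormal_vconj_orthogonal_bound:
  fixes e :: "nat \<Rightarrow> complex^'m::finite"
  assumes e: "herm_orthonormal r e"
    and conj_orth: "\<And>t s. t < r \<Longrightarrow> s < r \<Longrightarrow> herm_ip (vconj (e t)) (e s) = 0"
  shows "2 * r \<le> CARD('m)"
proof -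
  define g where "g = (\<lambda>(t::nat, k::nat). if k = 0 then e t else if k = 1 then \<i> *s e t
      else if k = 2 then vconj (e t) else \<i> *s vconj (e t))"
  have ee: "herm_ip (e t) (e s) = (if t = s then 1 else 0)" if "t < r" "s < r" for t s
    using e that by (simp add: herm_orthonormal_def)
  have ce: "herm_ip (e t) (vconj (e s)) = 0" if "t < r" "s < r" for t s
    using conj_orth[OF that(2,1)] herm_ip_cnj[of "e t" "vconj (e s)"] by simp
  have cc: "herm_ip (vconj (e t)) (vconj (e s)) = (if t = s then 1 else 0)" if "t < r" "s < r" for t s
    using ee[OF that] by (simp add: herm_ip_vconj)
  have "inner (g p) (g q) = (if p = q then 1 else 0)"
    if "p \<in> {..<r} \<times> {..<4}" "q \<in> {..<r} \<times> {..<4}" for p q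
  proof -
    obtain t k s k' where "p = (t, k)" "q = (s, k')"
      by (cases p, cases q) auto
    with that have pq: "p = (t, k)" "q = (s, k')" "t < r" "s < r" "k < 4" "k' < 4"
      by auto
    then have "k = 0 \<or> k = 1 \<or> k = 2 \<or> k = 3" "k' = 0 \<or> k' = 1 \<or> k' = 2 \<or> k' = 3" by auto
    then show ?thesis
      unfolding pq using ee[OF pq(3,4)] conj_orth[OF pq(3,4)] ce[OF pq(3,4)] cc[OF pq(3,4)]
      by (elim disjE) (simp_all add: g_def inner_eq_Re_herm_ip herm_ip_scale_left herm_ip_scale_right)
  qed
  then have "card ({..<r} \<times> {..<4::nat}) \<le> DIM(complex^'m)"
    by (intro card_le_DIM_if_orthonormal[where g = g]) auto
  then show ?thesis by (simp add: card_cartesian_product)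
qed

lemma real_skew_eigenvectors_realizable:
  fixes v :: "nat \<Rightarrow> complex^'m::finite"
  assumes skew: "\<And>p q. M q p = - M p q" and "\<mu> \<noteq> 0"
    and eig: "\<And>j. j < n \<Longrightarrow> real_mat_mult M (v j) = \<mu> *s v j"
    and card: "CARD('m) \<le> 2 * CARD('k::finite)"
  shows "\<exists>x :: nat \<Rightarrow> complex^'k. \<forall>j<n. \<forall>k<n. herm_ip (x j) (x k) = herm_ip (v j) (v k)"
proof -
  define V where "V = {y. real_mat_mult M y = \<mu> *s y}"
  obtain r e c where e: "herm_orthonormal r e" and eV: "\<forall>t<r. e t \<in> V"
    and v_eq: "\<forall>j<n. v j = (\<Sum>t<r. c t j *s e t)"
    using herm_gram_schmidt[where V = V and v = v and N = n] eig
    by (fastforce simp: V_def real_mat_mult_zero real_mat_mult_add real_mat_mult_scale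
        vector_add_ldistrib vector_smult_assoc mult.commute)
  have "2 * r \<le> CARD('m)"
    using e eV herm_ip_vconj_eigenvectors[where M = M, OF skew \<open>\<mu> \<noteq> 0\<close>]
    by (intro herm_orthonormal_vconj_orthogonal_bound) (auto simp: V_def)
  then have "r \<le> CARD('k)" using card by simp
  obtain h :: "nat \<Rightarrow> 'k" where "bij_betw h {0..<CARD('k)} UNIV"
    using ex_bij_betw_nat_finite[of "UNIV :: 'k set"] by auto
  then have h: "inj_on h {..<r}"
    using \<open>r \<le> CARD('k)\<close> by (auto simp: bij_betw_def elim!: inj_on_subset)
  define x where "x j = (\<Sum>t<r. c t j *s axis (h t) (1::complex))" for j
  have "herm_orthonormal r (\<lambda>t. axis (h t) (1::complex))"
    using h by (auto simp: herm_orthonormal_def herm_ip_axis inj_on_def)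
  then have "herm_ip (x j) (x k) = herm_ip (v j) (v k)" if "j < n" "k < n" for j k
    using e v_eq that by (simp add: x_def herm_ip_orthonormal_expansion)
  then show ?thesis by blast
qed

section \<open>Realizing skew conference matrices\<close>

locale skew_conference =
  fixes n :: nat and S :: "nat \<Rightarrow> nat \<Rightarrow> int"
  assumes S_diag: "\<And>j. S j j = 0"
    and S_skew: "\<And>j k. j < n \<Longrightarrow> k < n \<Longrightarrow> S k j = - S j k"
    and rows_orthogonal: "\<And>i j. i < n \<Longrightarrow> j < n \<Longrightarrow>
      (\<Sum>k<n. S i k * S j k) = (if i = j then int n - 1 else 0)"
    and two_le_n: "2 \<le> n"
begin

definition b :: real where
  "b = 1 / sqrt (real n - 1)"

definition W :: "nat \<Rightarrow> nat \<Rightarrow> complex" where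
  "W j k = (if j = k then 1 else 0) + \<i> * complex_of_real b * of_int (S j k)"

lemma b_pos: "b > 0"
  using two_le_n by (simp add: b_def)

lemma b_squared: "b * b * (real n - 1) = 1"
  using two_le_n by (simp add: b_def)

lemma columns_orthogonal:
  assumes "j < n" "k < n"
  shows "(\<Sum>m<n. S m j * S m k) = (if j = k then int n - 1 else 0)"
proof -
  have "(\<Sum>m<n. S m j * S m k) = (\<Sum>m<n. S j m * S k m)"
    using assms by (intro sum.cong) (simp_all add: S_skew[of j] S_skew[of k])
  then show ?thesis using rows_orthogonal[OF assms] by simp
qed

lemma S_square: "j < n \<Longrightarrow> k < n \<Longrightarrow> (\<Sum>m<n. S j m * S m k) = (if j = k then 1 - int n else 0)"
  using rows_orthogonal[of j k] by (simp add: S_skew[of k] sum_negf)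

lemma W_squared:
  assumes j: "j < n" and k: "k < n"
  shows "(\<Sum>m<n. cnj (W m j) * W m k) = 2 * W j k"
proof -
  have "(\<Sum>m<n. cnj (W m j) * W m k) = (\<Sum>m<n. Complex
      ((if m = j then 1 else 0) * (if m = k then 1 else 0) + b * b * of_int (S m j * S m k))
      (b * ((if m = j then 1 else 0) * of_int (S m k) - of_int (S m j) * (if m = k then 1 else 0))))"
    by (intro sum.cong refl) (simp add: W_def complex_eq_iff algebra_simps)
  also have "\<dots> = Complex ((if j = k then 1 else 0) + b * b * of_int (\<Sum>m<n. S m j * S m k))
      (b * (of_int (S j k) - of_int (S k j)))"
    using j k by (simp add: complex_eq_iff Re_sum Im_sum sum.distrib sum_subtractf
        sum_distrib_left[symmetric] if_distrib[of "\<lambda>x. x * _"] if_distrib[of "\<lambda>x. _ * x"] cong: if_cong)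
  also have "\<dots> = 2 * W j k"
    using columns_orthogonal[OF j k] S_skew[OF j k] b_squared S_diag[of j]
    by (auto simp: W_def complex_eq_iff algebra_simps of_nat_diff)
  finally show ?thesis .
qed

lemma S_W:
  assumes a: "a < n" and j: "j < n"
  shows "(\<Sum>m<n. complex_of_int (S a m) * W m j) = - \<i> / complex_of_real b * W a j"
proof -
  have "(\<Sum>m<n. complex_of_int (S a m) * W m j)
      = (\<Sum>m<n. (if m = j then of_int (S a m) else 0)) + \<i> * complex_of_real b * of_int (\<Sum>m<n. S a m * S m j)"
    by (simp add: W_def distrib_left sum.distrib sum_distrib_left algebra_simps if_distrib[of "\<lambda>x. _ * x"]
        cong: if_cong)
  also have "\<dots> = of_int (S a j) + \<i> * complex_of_real b * of_int (if a = j then 1 - int n else 0)"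
    using a j by (simp add: S_square)
  finally show ?thesis
    using b_pos b_squared S_diag[of j] two_le_n
    by (auto simp: W_def field_simps complex_eq_iff of_nat_diff)
qed

text \<open>
  The columns of \<open>W / \<surd>2\<close>, indexed by \<open>'n \<times> bool\<close>, have Gram matrix \<open>W\<close> and are eigenvectors of
  the real skew matrix \<open>S\<close>, so they can be moved into half the dimension.
\<close>

lemma realization:
  assumes n: "n = 2 * CARD('n::finite)"
  shows "\<exists>x :: nat \<Rightarrow> complex^'n. \<forall>j<n. \<forall>k<n. herm_ip (x j) (x k) = W j k"
proof -
  obtain \<sigma> :: "'n \<times> bool \<Rightarrow> nat" where \<sigma>: "bij_betw \<sigma> UNIV {..<n}"
    using ex_bij_betw_finite_nat[of "UNIV :: ('n \<times> bool) set"] n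
    by (auto simp: atLeast0LessThan mult.commute)
  have \<sigma>_less: "\<sigma> p < n" for p using \<sigma> by (auto simp: bij_betw_def)
  have reindex: "(\<Sum>p\<in>UNIV. g (\<sigma> p)) = (\<Sum>m<n. g m)" for g :: "nat \<Rightarrow> complex"
    by (rule sum.reindex_bij_betw[OF \<sigma>])
  define v where "v j = (\<chi> p. complex_of_real (1 / sqrt 2) * W (\<sigma> p) j)" for j
  define \<mu> where "\<mu> = - \<i> / complex_of_real b"
  define M where "M p q = real_of_int (S (\<sigma> p) (\<sigma> q))" for p q
  have gram: "herm_ip (v j) (v k) = W j k" if "j < n" "k < n" for j k
  proof -
    have "cnj (complex_of_real (1 / sqrt 2)) * complex_of_real (1 / sqrt 2) = 1 / 2"
      by (simp flip: of_real_mult)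
    then have "herm_ip (v j) (v k) = 1 / 2 * (\<Sum>p\<in>UNIV. cnj (W (\<sigma> p) j) * W (\<sigma> p) k)"
      by (simp add: herm_ip_def v_def sum_distrib_left mult_ac)
    then show ?thesis using W_squared[OF that] reindex[of "\<lambda>m. cnj (W m j) * W m k"] by simp
  qed
  have eigen: "real_mat_mult M (v j) = \<mu> *s v j" if "j < n" for j
  proof (subst vec_eq_iff, intro allI)
    fix p
    have "real_mat_mult M (v j) $ p = complex_of_real (1 / sqrt 2) *
        (\<Sum>q\<in>UNIV. complex_of_int (S (\<sigma> p) (\<sigma> q)) * W (\<sigma> q) j)"
      by (simp add: real_mat_mult_def v_def M_def sum_distrib_left algebra_simps)
    also have "(\<Sum>q\<in>UNIV. complex_of_int (S (\<sigma> p) (\<sigma> q)) * W (\<sigma> q) j)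
        = \<mu> * W (\<sigma> p) j"
      using S_W[OF \<sigma>_less that, folded \<mu>_def] reindex[of "\<lambda>m. complex_of_int (S (\<sigma> p) m) * W m j"] by simp
    finally show "real_mat_mult M (v j) $ p = (\<mu> *s v j) $ p"
      by (simp add: v_def algebra_simps)
  qed
  have skew: "M q p = - M p q" for p q
    unfolding M_def using S_skew[of "\<sigma> p" "\<sigma> q"] \<sigma>_less by simp
  have "\<mu> \<noteq> 0" using b_pos by (simp add: \<mu>_def)
  from real_skew_eigenvectors_realizable[where 'k = 'n and v = v and n = n, OF skew this eigen] n
  have "\<exists>x :: nat \<Rightarrow> complex^'n. \<forall>j<n. \<forall>k<n. herm_ip (x j) (x k) = herm_ip (v j) (v k)"
    by simp
  then show ?thesis using gram by simp
qed

end

section \<open>Codes and tournaments\<close>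

lemma inner_set_cnj:
  assumes "a \<in> inner_set X"
  shows "cnj a \<in> inner_set X"
proof -
  obtain x y where "a = herm_ip x y" "x \<in> X" "y \<in> X" "x \<noteq> y"
    using assms unfolding inner_set_def by blast
  moreover have "cnj a = herm_ip y x" using \<open>a = herm_ip x y\<close> herm_ip_cnj[of y x] by simp
  ultimately show ?thesis unfolding inner_set_def by blast
qed

lemma
  assumes "complex_spherical_2code X"
  shows inner_set_code_alpha: "inner_set X = {code_alpha X, cnj (code_alpha X)}"
    and Im_code_alpha_pos: "Im (code_alpha X) > 0"
proof -
  from assms obtain a where a: "a \<in> inner_set X" "a \<notin> \<real>" and card: "card (inner_set X) = 2"
    by (auto simp: complex_spherical_2code_def)
  have "Im a \<noteq> 0" using a(2) by (auto simp: complex_is_Real_iff)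
  define a' where "a' = (if Im a > 0 then a else cnj a)"
  have a'_pos: "Im a' > 0" using \<open>Im a \<noteq> 0\<close> by (auto simp: a'_def)
  have "finite (inner_set X)" using card by (metis card.infinite zero_neq_numeral)
  moreover have "{a, cnj a} \<subseteq> inner_set X" using a(1) inner_set_cnj by auto
  moreover have "cnj a \<noteq> a" using \<open>Im a \<noteq> 0\<close> by (auto simp: complex_eq_iff)
  ultimately have "inner_set X = {a, cnj a}" using card card_subset_eq[of "inner_set X" "{a, cnj a}"]
    by simp
  then have eq: "inner_set X = {a', cnj a'}" by (auto simp: a'_def)
  have "code_alpha X = a'"
    unfolding code_alpha_def using eq a'_pos by (intro the_equality) auto
  then show "inner_set X = {code_alpha X, cnj (code_alpha X)}" and "Im (code_alpha X) > 0"
    using eq a'_pos by simp_all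
qed

lemma two_angle_frame_of_code:
  assumes code: "complex_spherical_2code X" and f: "bij_betw f {..<n} X"
  shows "two_angle_frame n f (code_alpha X)"
proof
  have fX: "f j \<in> X" if "j < n" for j using f that by (auto simp: bij_betw_def)
  show inj: "inj_on f {..<n}" using f by (auto simp: bij_betw_def)
  show "herm_ip (f j) (f j) = 1" if "j < n" for j
    using code fX[OF that] by (auto simp: complex_spherical_2code_def Omega_def)
  show "herm_ip (f j) (f k) = code_alpha X \<or> herm_ip (f j) (f k) = cnj (code_alpha X)"
    if "j < n" "k < n" "j \<noteq> k" for j k
  proof -
    have "f j \<noteq> f k" using inj that by (auto dest: inj_onD)
    then have "herm_ip (f j) (f k) \<in> inner_set X" using fX that unfolding inner_set_def by auto
    then show ?thesis using inner_set_code_alpha[OF code] by auto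
  qed
  show "Im (code_alpha X) > 0" using Im_code_alpha_pos[OF code] .
  obtain x y where "x \<in> X" "y \<in> X" "x \<noteq> y"
    using inner_set_code_alpha[OF code] unfolding inner_set_def by blast
  then have "card {x, y} \<le> card X"
    using code by (intro card_mono) (auto simp: complex_spherical_2code_def)
  then have "2 \<le> card X" using \<open>x \<noteq> y\<close> by simp
  then show "2 \<le> n" using bij_betw_same_card[OF f] by simp
qed

lemma card_code_le_two_dim:
  assumes "even CARD('n)" and code: "complex_spherical_2code (X :: (complex^'n::finite) set)"
  shows "card X \<le> 2 * CARD('n)"
proof -
  obtain f where "bij_betw f {0..<card X} X"
    using ex_bij_betw_nat_finite code by (auto simp: complex_spherical_2code_def)
  then interpret two_angle_frame "card X" f "code_alpha X"
    by (intro two_angle_frame_of_code[OF code]) (simp add: atLeast0LessThan)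
  show ?thesis using card_le_two_dim[OF assms(1)] .
qed

lemma skew_hadamard_iff_rows_orthogonal:
  fixes S :: "nat \<Rightarrow> nat \<Rightarrow> int"
  assumes diag: "\<And>i. S i i = 0"
    and sign: "\<And>i j. i < n \<Longrightarrow> j < n \<Longrightarrow> i \<noteq> j \<Longrightarrow> S i j = 1 \<or> S i j = -1"
    and skew: "\<And>i j. S j i = - S i j"
  shows "skew_hadamard n (\<lambda>i j. (if i = j then 1 else 0) + S i j) \<longleftrightarrow>
    (\<forall>i<n. \<forall>j<n. (\<Sum>k<n. S i k * S j k) = (if i = j then int n - 1 else 0))"
proof -
  have rows: "(\<Sum>k<n. ((if i = k then 1 else 0) + S i k) * ((if j = k then 1 else 0) + S j k))
      = (if i = j then 1 else 0) + (\<Sum>k<n. S i k * S j k)" if "i < n" "j < n" for i j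
  proof -
    have "(\<Sum>k<n. ((if i = k then 1 else 0) + S i k) * ((if j = k then 1 else 0) + S j k))
        = (\<Sum>k<n. (if i = k then 1 else 0) * (if j = k then 1 else 0)) + (\<Sum>k<n. (if i = k then S j k else 0))
          + (\<Sum>k<n. (if j = k then S i k else 0)) + (\<Sum>k<n. S i k * S j k)"
      by (simp add: sum.distrib algebra_simps if_distrib[of "\<lambda>x. x * _"] if_distrib[of "\<lambda>x. _ * x"]
          cong: if_cong)
    also have "\<dots> = (if i = j then 1 else 0) + S j i + S i j + (\<Sum>k<n. S i k * S j k)"
      using that by (simp add: if_distrib[of "\<lambda>x. x * _"] cong: if_cong)
    finally show ?thesis using skew[of i j] by simp
  qed
  have "\<forall>i<n. \<forall>j<n. (if i = j then 1 else 0) + S i j = 1 \<or> (if i = j then 1 else 0) + S i j = -1"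
    using sign diag by auto
  moreover have "\<forall>i<n. \<forall>j<n. (if i = j then 1 else 0) + S i j + ((if j = i then 1 else 0) + S j i)
      = (if i = j then 2 else 0)"
  proof (intro allI impI)
    fix i j show "(if i = j then 1 else 0) + S i j + ((if j = i then 1 else 0) + S j i)
      = (if i = j then 2 else (0::int))"
      using skew[of i j] diag[of i] by auto
  qed
  ultimately have "skew_hadamard n (\<lambda>i j. (if i = j then 1 else 0) + S i j) \<longleftrightarrow>
    (\<forall>i<n. \<forall>j<n. (\<Sum>k<n. ((if i = k then 1 else 0) + S i k) * ((if j = k then 1 else 0) + S j k))
      = (if i = j then int n else 0))"
    unfolding skew_hadamard_def by simp
  also have "\<dots> \<longleftrightarrow> (\<forall>i<n. \<forall>j<n. (\<Sum>k<n. S i k * S j k) = (if i = j then int n - 1 else 0))"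
    using rows by (intro all_cong imp_cong refl) auto
  finally show ?thesis .
qed

definition tournament_sign :: "(nat \<Rightarrow> nat \<Rightarrow> bool) \<Rightarrow> nat \<Rightarrow> nat \<Rightarrow> int" where
  "tournament_sign E i j = adj_matrix E i j - adj_matrix E j i"

lemma tournament_sign_diag: "tournament_sign E i i = 0"
  by (simp add: tournament_sign_def)

lemma tournament_sign_skew: "tournament_sign E j i = - tournament_sign E i j"
  by (simp add: tournament_sign_def)

lemma tournament_sign_eq:
  assumes "is_tournament n E" "i < n" "j < n" "i \<noteq> j"
  shows "tournament_sign E i j = (if E i j then 1 else -1)"
proof -
  have "E i j \<longleftrightarrow> \<not> E j i" using assms unfolding is_tournament_def by blast
  then show ?thesis by (auto simp: tournament_sign_def adj_matrix_def)
qed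

lemma code_of_skew_gram:
  fixes x :: "nat \<Rightarrow> complex^'n::finite" and S :: "nat \<Rightarrow> nat \<Rightarrow> int" and b :: real
  assumes "2 \<le> n" and "b > 0"
    and gram: "\<And>j k. j < n \<Longrightarrow> k < n \<Longrightarrow>
      herm_ip (x j) (x k) = (if j = k then 1 else \<i> * complex_of_real b * of_int (S j k))"
    and sign: "\<And>j k. j < n \<Longrightarrow> k < n \<Longrightarrow> j \<noteq> k \<Longrightarrow> S j k = 1 \<or> S j k = -1"
    and skew: "\<And>j k. j < n \<Longrightarrow> k < n \<Longrightarrow> S k j = - S j k"
  shows "inj_on x {..<n}" and "complex_spherical_2code (x ` {..<n})"
    and "code_alpha (x ` {..<n}) = \<i> * complex_of_real b"
proof -
  define \<alpha> where "\<alpha> = \<i> * complex_of_real b"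
  have "\<alpha> \<noteq> 1" "- \<alpha> \<noteq> 1" "- \<alpha> \<noteq> \<alpha>" using \<open>b > 0\<close> by (auto simp: \<alpha>_def complex_eq_iff)
  have gram_off: "herm_ip (x j) (x k) \<in> {\<alpha>, - \<alpha>}" if "j < n" "k < n" "j \<noteq> k" for j k
    using gram[OF that(1,2)] sign[OF that] that(3) by (auto simp: \<alpha>_def)
  show inj: "inj_on x {..<n}"
  proof (rule inj_onI, rule ccontr)
    fix j k assume "j \<in> {..<n}" "k \<in> {..<n}" "x j = x k" "j \<noteq> k"
    then show False using gram_off[of j k] gram[of j j] \<open>\<alpha> \<noteq> 1\<close> \<open>- \<alpha> \<noteq> 1\<close> by auto
  qed
  have "x 0 \<noteq> x 1" "x 1 \<noteq> x 0" "x 0 \<in> x ` {..<n}" "x 1 \<in> x ` {..<n}"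
    using inj \<open>2 \<le> n\<close> by (auto dest: inj_onD)
  then have "herm_ip (x 0) (x 1) \<in> inner_set (x ` {..<n})" "herm_ip (x 1) (x 0) \<in> inner_set (x ` {..<n})"
    unfolding inner_set_def by blast+
  moreover have "{herm_ip (x 0) (x 1), herm_ip (x 1) (x 0)} = {\<alpha>, - \<alpha>}"
    using gram_off[of 0 1] skew[of 0 1] gram[of 1 0] gram[of 0 1] \<open>2 \<le> n\<close> by (auto simp: \<alpha>_def)
  moreover have "inner_set (x ` {..<n}) \<subseteq> {\<alpha>, - \<alpha>}"
    using gram_off unfolding inner_set_def by blast
  ultimately have inner_set: "inner_set (x ` {..<n}) = {\<alpha>, - \<alpha>}"
    by (metis empty_subsetI insert_subset subset_antisym)
  show code: "complex_spherical_2code (x ` {..<n})"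
    unfolding complex_spherical_2code_def inner_set
    using gram \<open>- \<alpha> \<noteq> \<alpha>\<close> \<open>b > 0\<close> by (auto simp: Omega_def \<alpha>_def complex_is_Real_iff)
  have "code_alpha (x ` {..<n}) \<in> {\<alpha>, - \<alpha>}" "Im (code_alpha (x ` {..<n})) > 0"
    using inner_set_code_alpha[OF code] Im_code_alpha_pos[OF code] inner_set by auto
  then show "code_alpha (x ` {..<n}) = \<i> * complex_of_real b"
    using \<open>b > 0\<close> by (auto simp: \<alpha>_def)
qed

lemma tournament_of_code_if_rows_orthogonal:
  assumes tour: "is_tournament n E" and n: "n = 2 * CARD('n::finite)"
    and rows: "\<forall>i<n. \<forall>j<n. (\<Sum>k<n. tournament_sign E i k * tournament_sign E j k)
      = (if i = j then int n - 1 else 0)"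
  shows "\<exists>X :: (complex^'n) set. is_tournament_of_code n E X"
proof -
  have "2 \<le> n" using n finite_UNIV_card_ge_0[where 'a = 'n] by simp
  interpret skew_conference n "tournament_sign E"
    using rows \<open>2 \<le> n\<close> by unfold_locales (simp_all add: tournament_sign_diag, rule tournament_sign_skew)
  obtain x :: "nat \<Rightarrow> complex^'n" where gram: "\<forall>j<n. \<forall>k<n. herm_ip (x j) (x k) = W j k"
    using realization[OF n] by blast
  have sign: "\<And>j k. j < n \<Longrightarrow> k < n \<Longrightarrow> j \<noteq> k \<Longrightarrow>
      tournament_sign E j k = 1 \<or> tournament_sign E j k = -1"
    using tournament_sign_eq[OF tour] by simp
  have gram': "\<And>j k. j < n \<Longrightarrow> k < n \<Longrightarrow>
      herm_ip (x j) (x k) = (if j = k then 1 else \<i> * complex_of_real b * of_int (tournament_sign E j k))"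
    using gram by (simp add: W_def tournament_sign_diag)
  note code = code_of_skew_gram[OF \<open>2 \<le> n\<close> b_pos gram' sign tournament_sign_skew]
  have "E i j \<longleftrightarrow> code_edge (x ` {..<n}) (x i) (x j)" if "i < n" "j < n" for i j
  proof (cases "i = j")
    case True
    then have "\<not> E i j" using tour that unfolding is_tournament_def by blast
    then show ?thesis using True that gram code(3) by (auto simp: code_edge_def W_def complex_eq_iff)
  next
    case False
    then show ?thesis using tournament_sign_eq[OF tour that False] that gram code(3) b_pos
      by (auto simp: code_edge_def W_def complex_eq_iff)
  qed
  then have "is_tournament_of_code n E (x ` {..<n})"
    using code by (auto simp: is_tournament_of_code_def bij_betw_def)
  then show ?thesis by blast
qed

lemma rows_orthogonal_if_tournament_of_code:
  assumes "even CARD('n::finite)" and n: "n = 2 * CARD('n)"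
    and tour: "is_tournament n E" and "is_tournament_of_code n E (X :: (complex^'n) set)"
  shows "\<forall>i<n. \<forall>j<n. (\<Sum>k<n. tournament_sign E i k * tournament_sign E j k)
      = (if i = j then int n - 1 else 0)"
proof -
  obtain f where code: "complex_spherical_2code X" and f: "bij_betw f {..<n} X"
    and edges: "\<forall>i<n. \<forall>j<n. E i j \<longleftrightarrow> code_edge X (f i) (f j)"
    using assms(4) by (auto simp: is_tournament_of_code_def)
  interpret two_angle_frame n f "code_alpha X" by (rule two_angle_frame_of_code[OF code f])
  have "tournament_sign E i j = S i j" if "i < n" "j < n" for i j
    using that edges f tournament_sign_eq[OF tour that]
    by (cases "i = j") (auto simp: S_def tournament_sign_diag code_edge_def bij_betw_def)
  then show ?thesis using rows_S_orthogonal[OF assms(1) n] by simp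
qed

theorem theorem4p7:
  assumes "even CARD('n::finite)"
  shows "(\<forall>X :: (complex ^ 'n) set. complex_spherical_2code X \<longrightarrow> card X \<le> 2 * CARD('n))
    \<and> (\<forall>E. is_tournament (2 * CARD('n)) E \<longrightarrow>
          ((\<exists>X :: (complex ^ 'n) set. is_tournament_of_code (2 * CARD('n)) E X) \<longleftrightarrow>
           skew_hadamard (2 * CARD('n))
             (\<lambda>i j. (if i = j then 1 else 0) + adj_matrix E i j - adj_matrix E j i)))"
proof (intro conjI allI impI)
  show "card X \<le> 2 * CARD('n)" if "complex_spherical_2code X" for X :: "(complex^'n) set"
    using card_code_le_two_dim[OF assms that] .
next
  fix E assume tour: "is_tournament (2 * CARD('n)) E"
  have "(\<lambda>i j. (if i = j then 1 else 0) + adj_matrix E i j - adj_matrix E j i)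
      = (\<lambda>i j. (if i = j then 1 else 0) + tournament_sign E i j)"
    by (simp add: tournament_sign_def fun_eq_iff)
  moreover have "skew_hadamard (2 * CARD('n)) (\<lambda>i j. (if i = j then 1 else 0) + tournament_sign E i j)
      \<longleftrightarrow> (\<forall>i<2 * CARD('n). \<forall>j<2 * CARD('n).
        (\<Sum>k<2 * CARD('n). tournament_sign E i k * tournament_sign E j k)
        = (if i = j then int (2 * CARD('n)) - 1 else 0))"
    using tournament_sign_eq[OF tour]
    by (intro skew_hadamard_iff_rows_orthogonal tournament_sign_diag tournament_sign_skew) auto
  ultimately show "(\<exists>X :: (complex^'n) set. is_tournament_of_code (2 * CARD('n)) E X) \<longleftrightarrow>
      skew_hadamard (2 * CARD('n)) (\<lambda>i j. (if i = j then 1 else 0) + adj_matrix E i j - adj_matrix E j i)"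
    using tournament_of_code_if_rows_orthogonal[OF tour refl]
      rows_orthogonal_if_tournament_of_code[OF assms refl tour] by auto
qed

end
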